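(* Let $n\ge0$ and $l\ge0$. In $H^*(\operatorname{Gr}_2(\mathbb{R}^{2^{n+1}+1+2l});\mathbb{Z}/2)$, $$Q_n(w_2^{2l+1}) = w_1^{2l+2}\bar w_{2^{n+1}-1+2l}.$$
   Context: $H^*(\operatorname{Gr}_2(\mathbb{R}^m);\mathbb{Z}/2)=\mathbb{Z}/2[w_1,w_2]/(\bar w_k : k\ge m-1)$, where $w_1,w_2$ are Stiefel–Whitney classes of the tautological bundle and $\bar w_k$ are defined by $(1+w_1+w_2)(1+\bar w_1+\bar w_2+\cdots)=1$. $Q_n$ is the Milnor primitive: $Q_0=Sq^1$, $Q_n=[Q_{n-1},Sq^{2^n}]$. *)

theory Defs
  imports "HOL-Computational_Algebra.Polynomial" "HOL-Library.Z2"
begin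

text \<open>Model of H^*(BO(2); Z/2) = F_2[w1,w2] as bivariate polynomials over the field
  Z/2 (type bit): an element p :: bit poly poly is a polynomial in w2 whose
  coefficients are polynomials in w1. The monomial w1^a w2^b has coefficient
  coeff (coeff p b) a and cohomological degree a + 2b.\<close>

type_synonym F2poly = "bit poly poly"

definition w1 :: F2poly where "w1 = [:[:0, 1:]:]"
definition w2 :: F2poly where "w2 = [:0, 1:]"

definition const :: "bit \<Rightarrow> F2poly" where "const c = [:[:c:]:]"

definition mon :: "nat \<Rightarrow> nat \<Rightarrow> F2poly" where "mon a b = monom (monom 1 a) b"

definition hom_part :: "nat \<Rightarrow> F2poly \<Rightarrow> F2poly" where
  "hom_part d p = (\<Sum>b\<le>d. \<Sum>a\<le>d. if a + 2 * b = d then const (coeff (coeff p b) a) * mon a b else 0)"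

text \<open>Steenrod squares on F_2[w1,w2]: the total square is the ring homomorphism with
  Sq(w1) = w1 + w1^2 and Sq(w2) = w2 + w1 w2 + w2^2 (Wu formula, Cartan formula);
  Sq^i picks the part raising degree by i.\<close>
definition Sq :: "nat \<Rightarrow> F2poly \<Rightarrow> F2poly" where
  "Sq i p = (\<Sum>b\<le>degree p. \<Sum>a\<le>degree (coeff p b).
      const (coeff (coeff p b) a) *
      hom_part (a + 2 * b + i) ((w1 + w1 ^ 2) ^ a * (w2 + w1 * w2 + w2 ^ 2) ^ b))"

fun Q :: "nat \<Rightarrow> F2poly \<Rightarrow> F2poly" where
  "Q 0 p = Sq 1 p"
| "Q (Suc n) p = Q n (Sq (2 ^ Suc n) p) - Sq (2 ^ Suc n) (Q n p)"

text \<open>Dual classes: (1 + w1 + w2)(1 + wbar_1 + wbar_2 + ...) = 1, i.e.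
  wbar_0 = 1 and wbar_k + w1 wbar_{k-1} + w2 wbar_{k-2} = 0 (wbar_{-1} = 0).\<close>
fun wbar :: "nat \<Rightarrow> F2poly" where
  "wbar 0 = 1"
| "wbar (Suc 0) = - w1"
| "wbar (Suc (Suc k)) = - (w1 * wbar (Suc k) + w2 * wbar k)"

text \<open>The ideal (wbar_k : k \<ge> m - 1) of F_2[w1,w2]; H^*(Gr_2(R^m); Z/2) is the quotient.\<close>
definition gr_ideal :: "nat \<Rightarrow> F2poly set" where
  "gr_ideal m = {p. \<exists>K c. p = (\<Sum>k\<in>{m - 1..K}. c k * wbar k)}"

definition eq_in_Gr2 :: "nat \<Rightarrow> F2poly \<Rightarrow> F2poly \<Rightarrow> bool" where
  "eq_in_Gr2 m p q \<longleftrightarrow> p - q \<in> gr_ideal m"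

end

(*
  Sq^i p is the coefficient of t^i in the ring homomorphism w1 |-> w1 + w1^2 t,
  w2 |-> w2 + w1 w2 t + w2^2 t^2 (Cartan formula). Pulling back along the injective
  splitting map w1 |-> x1 + x2, w2 |-> x1 x2, which commutes with the squares, the
  x_i become classes with Sq(x_i) = x_i + x_i^2 t. There Q_n is a derivation with
  Q_n x_i = x_i^N, N = 2^(n+1), by induction on n: if Q_{n-1} commutes with Sq^k for
  0 < k < 2^n, the Cartan formula makes [Q_{n-1}, Sq^(2^n)] a derivation, determined by
  its values on x_1, x_2. As w1 wbar_k pulls back to the power sum x1^(k+1) + x2^(k+1),
  Q_n w2 = x1 x2 (x1^(N-1) + x2^(N-1)) = w1 w2 wbar_(N-2), and Q_n(w2^(2l+1)) =
  w1 w2^(2l+1) wbar_(N-2). Finally w1^j wbar_(i+j) = w2^j wbar_i modulo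
  (wbar_k : k >= i+j+1), by induction on j using w2 wbar_i = wbar_(i+2) + w1 wbar_(i+1).
*)

theory Submission
  imports Defs
begin

lemma of_nat_bit: "(of_nat n :: bit) = of_bool (odd n)"
  by (induction n) auto

lemma CHAR_bit: "CHAR(bit) = 2"
  by (rule CHAR_eqI) (auto simp: of_nat_bit)

lemma CHAR_F2poly: "CHAR(F2poly) = 2"
  by (simp add: CHAR_bit)

lemma add_self_CHAR_2:
  assumes "CHAR('a::ring_1) = 2"
  shows "(x::'a) + x = 0"
  using uminus_CHAR_2[OF assms, of x] by (metis add.right_inverse)

lemma of_nat_CHAR_2:
  assumes "CHAR('a::ring_1) = 2"
  shows "(of_nat n :: 'a) = of_bool (odd n)"
proof (cases "even n")
  case False
  then obtain k where "n = 2 * k + 1" by (blast elim: oddE)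
  then show ?thesis using assms of_nat_CHAR[where 'a='a] by simp
qed (use assms of_nat_eq_0_iff_char_dvd[where 'a='a] in auto)

lemma power_two_power_add_CHAR_2:
  assumes "CHAR('a::comm_ring_1) = 2"
  shows "((x::'a) + y) ^ 2 ^ j = x ^ 2 ^ j + y ^ 2 ^ j"
proof (induction j)
  case (Suc j)
  have two: "(2::'a) = 0"
    using of_nat_CHAR[where 'a='a] assms by simp
  have "(x + y) ^ 2 ^ Suc j = ((x + y) ^ 2 ^ j) ^ 2"
    by (simp add: power_mult[symmetric] mult.commute)
  also have "\<dots> = (x ^ 2 ^ j) ^ 2 + (y ^ 2 ^ j) ^ 2"
    by (simp only: Suc power2_sum two mult_zero_left add_0_right)
  also have "\<dots> = x ^ 2 ^ Suc j + y ^ 2 ^ Suc j"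
    by (simp add: power_mult[symmetric] mult.commute)
  finally show ?case .
qed simp

lemma two_F2poly: "(2::F2poly) = 0"
  by (metis one_add_one add_self_CHAR_2[OF CHAR_F2poly])

lemma add_self_left_F2poly: "(p::F2poly) + (p + q) = q"
  by (simp add: add.assoc[symmetric] add_self_CHAR_2[OF CHAR_F2poly])

lemmas F2poly_CHAR_2_simps [simp] =
  minus_CHAR_2[OF CHAR_F2poly] uminus_CHAR_2[OF CHAR_F2poly] add_self_CHAR_2[OF CHAR_F2poly]
  two_F2poly add_self_left_F2poly

locale ring_hom =
  fixes h :: "'a::comm_ring_1 \<Rightarrow> 'b::comm_ring_1"
  assumes hom_add [simp]: "h (x + y) = h x + h y"
    and hom_mult [simp]: "h (x * y) = h x * h y"
    and hom_one [simp]: "h 1 = 1"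
begin

lemma hom_zero [simp]: "h 0 = 0"
  using hom_add[of 0 0] by simp

lemma hom_uminus [simp]: "h (- x) = - h x"
  using hom_add[of "- x" x] by (simp add: eq_neg_iff_add_eq_0)

lemma hom_diff [simp]: "h (x - y) = h x - h y"
  using hom_add[of x "- y"] by simp

lemma hom_sum [simp]: "h (sum f A) = (\<Sum>x\<in>A. h (f x))"
  by (induction A rule: infinite_finite_induct) simp_all

lemma hom_power [simp]: "h (x ^ n) = h x ^ n"
  by (induction n) simp_all

lemma ring_hom_map_poly: "ring_hom (map_poly h)"
  by unfold_locales (simp_all add: poly_eq_iff coeff_map_poly coeff_mult)

end

lemma ring_hom_comp: "ring_hom f \<Longrightarrow> ring_hom g \<Longrightarrow> ring_hom (f \<circ> g)"
  by (simp add: ring_hom_def)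

lemma ring_hom_poly: "ring_hom (\<lambda>p. poly p x)"
  by unfold_locales simp_all

lemma ring_hom_coeff_0: "ring_hom (\<lambda>p. coeff p 0)"
  by unfold_locales (simp_all add: coeff_mult_0)

locale derivation =
  fixes D :: "'a::comm_ring_1 \<Rightarrow> 'a"
  assumes der_add [simp]: "D (x + y) = D x + D y"
    and der_mult [simp]: "D (x * y) = D x * y + x * D y"
begin

lemma der_zero [simp]: "D 0 = 0"
  using der_add[of 0 0] by simp

lemma der_one [simp]: "D 1 = 0"
  using der_mult[of 1 1] by simp

lemma der_sum [simp]: "D (sum f A) = (\<Sum>x\<in>A. D (f x))"
  by (induction A rule: infinite_finite_induct) simp_all

lemma der_power: "D (x ^ n) = of_nat n * x ^ (n - 1) * D x"
proof (induction n)
  case (Suc n)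
  then show ?case
    by (cases n) (simp_all add: algebra_simps)
qed simp

lemma der_power_CHAR_2:
  assumes "CHAR('a) = 2"
  shows "D (x ^ n) = (if even n then 0 else x ^ (n - 1) * D x)"
  by (simp add: der_power of_nat_CHAR_2[OF assms])

end

definition eval2 ::
    "('c::comm_ring_1 \<Rightarrow> 'a::comm_ring_1) \<Rightarrow> 'a \<Rightarrow> 'a \<Rightarrow> 'c poly poly \<Rightarrow> 'a" where
  "eval2 h x y p = poly (map_poly (\<lambda>c. poly (map_poly h c) x) p) y"

lemma ring_hom_eval2:
  assumes "ring_hom h"
  shows "ring_hom (eval2 h x y)"
proof -
  have "ring_hom ((\<lambda>c. poly c x) \<circ> map_poly h)"
    by (intro ring_hom_comp ring_hom_poly ring_hom.ring_hom_map_poly assms)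
  then have "ring_hom (map_poly (\<lambda>c. poly (map_poly h c) x))"
    by (simp add: o_def ring_hom.ring_hom_map_poly)
  from ring_hom_comp[OF ring_hom_poly this] show ?thesis
    by (simp add: eval2_def[abs_def] o_def)
qed

lemma eval2_simps [simp]:
  fixes h :: "bit \<Rightarrow> 'a::comm_ring_1"
  assumes "ring_hom h"
  shows "eval2 h x y (const c) = h c" "eval2 h x y w1 = x" "eval2 h x y w2 = y"
  using ring_hom.hom_zero[OF assms] ring_hom.hom_one[OF assms]
  by (simp_all add: eval2_def const_def w1_def w2_def map_poly_pCons)

lemma ring_hom_const: "ring_hom const"
  by unfold_locales (simp_all add: const_def one_pCons)

lemma const_cases: "const c = 0 \<or> const c = 1"
  by (cases c) (simp_all add: const_def one_pCons)

lemma mon_eq: "mon a b = w1 ^ a * w2 ^ b"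
proof -
  have const_power: "[:x:] ^ n = [:x ^ n:]" for x :: "'a::comm_ring_1" and n
    by (induction n) (simp_all add: mult.commute)
  show ?thesis
    by (simp add: mon_def w1_def w2_def monom_altdef const_power)
qed

lemma const_mult_mon: "const c * mon a b = monom (monom c a) b"
  by (simp add: const_def mon_def smult_monom)

lemma F2poly_monomial_expansion:
  "p = (\<Sum>b\<le>degree p. \<Sum>a\<le>degree (coeff p b). const (coeff (coeff p b) a) * mon a b)"
  by (simp add: const_mult_mon monom_sum[symmetric] poly_as_sum_of_monoms)

lemma F2poly_additive_eqI:
  fixes F G :: "F2poly \<Rightarrow> 'a::ab_group_add"
  assumes "\<And>p q. F (p + q) = F p + F q" "\<And>p q. G (p + q) = G p + G q"
    and "\<And>a b. F (mon a b) = G (mon a b)"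
  shows "F p = G p"
proof -
  have zero: "F 0 = 0" "G 0 = 0"
    using assms(1)[of 0 0] assms(2)[of 0 0] by simp_all
  have sum: "H (sum f A) = (\<Sum>x\<in>A. H (f x))" if "H = F \<or> H = G" for H f and A :: "'b set"
    using that by (induction A rule: infinite_finite_induct) (auto simp: zero assms(1,2))
  have "F (const c * mon a b) = G (const c * mon a b)" for a b c
    using const_cases[of c] by (auto simp: zero assms(3))
  then show ?thesis
    by (subst (1 2) F2poly_monomial_expansion) (simp add: sum)
qed

lemma ring_hom_F2poly_eqI:
  assumes "ring_hom F" "ring_hom G" "F w1 = G w1" "F w2 = G w2"
  shows "F p = G p"
proof -
  interpret F: ring_hom F by fact
  interpret G: ring_hom G by fact
  show ?thesis
    by (rule F2poly_additive_eqI) (simp_all add: mon_eq assms(3,4))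
qed

lemma derivation_F2poly_eq_zero:
  fixes D :: "F2poly \<Rightarrow> F2poly"
  assumes "derivation D" "D w1 = 0" "D w2 = 0"
  shows "D p = 0"
proof -
  interpret derivation D by fact
  show ?thesis
    by (rule F2poly_additive_eqI[where G = "\<lambda>_. 0"]) (simp_all add: mon_eq der_power assms)
qed

section \<open>Steenrod squares as coefficients of the total square\<close>

lemma ring_hom_const_poly: "ring_hom (\<lambda>c. [:const c:])"
  by unfold_locales (simp_all add: const_def one_pCons)

text \<open>\<open>grade p = p(t w\<^sub>1, t\<^sup>2 w\<^sub>2)\<close>: the coefficient of \<open>t\<^sup>d\<close> is the homogeneous
  part of degree \<open>d\<close>.\<close>

definition grade :: "F2poly \<Rightarrow> F2poly poly" where
  "grade = eval2 (\<lambda>c. [:const c:]) (monom w1 1) (monom w2 2)"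

interpretation grade: ring_hom grade
  unfolding grade_def by (rule ring_hom_eval2[OF ring_hom_const_poly])

lemma grade_simps [simp]: "grade w1 = monom w1 1" "grade w2 = monom w2 2"
  by (simp_all add: grade_def ring_hom_const_poly)

lemma grade_mon: "grade (mon a b) = monom (mon a b) (a + 2 * b)"
  by (simp add: mon_eq monom_power mult_monom mult.commute)

lemma hom_part_add: "hom_part e (p + q) = hom_part e p + hom_part e q"
proof -
  interpret const: ring_hom const by (rule ring_hom_const)
  show ?thesis
    unfolding hom_part_def sum.distrib[symmetric]
    by (intro sum.cong refl) (simp add: distrib_right del: add_bit_eq_xor)
qed

lemma hom_part_mon: "hom_part e (mon a b) = (if a + 2 * b = e then mon a b else 0)"
proof -
  interpret const: ring_hom const by (rule ring_hom_const)
  define v where "v = (if a + 2 * b = e then mon a b else 0)"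
  have "(if a' + 2 * b' = e then const (coeff (coeff (mon a b) b') a') * mon a' b' else 0) =
      (if b' = b then if a' = a then v else 0 else 0)" for a' b'
    by (auto simp: mon_def v_def)
  then have "hom_part e (mon a b) = (\<Sum>b'\<le>e. if b' = b then \<Sum>a'\<le>e. if a' = a then v else 0 else 0)"
    unfolding hom_part_def by (intro sum.cong) auto
  also have "\<dots> = v"
    by (simp add: v_def)
  finally show ?thesis
    by (simp add: v_def)
qed

lemma hom_part_eq_coeff_grade: "hom_part e p = coeff (grade p) e"
  by (rule F2poly_additive_eqI) (simp_all add: hom_part_add hom_part_mon grade_mon)

definition homogeneous :: "nat \<Rightarrow> F2poly \<Rightarrow> bool" where
  "homogeneous d p \<longleftrightarrow> grade p = monom p d"

lemma homogeneous_0 [simp]: "homogeneous d 0"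
  by (simp add: homogeneous_def)

lemma homogeneous_w1: "homogeneous 1 w1" and homogeneous_w2: "homogeneous 2 w2"
  by (simp_all add: homogeneous_def)

lemma homogeneous_mult:
  "homogeneous d p \<Longrightarrow> homogeneous e q \<Longrightarrow> homogeneous (d + e) (p * q)"
  by (simp add: homogeneous_def mult_monom)

lemma homogeneous_sum:
  "(\<And>x. x \<in> A \<Longrightarrow> homogeneous d (f x)) \<Longrightarrow> homogeneous d (sum f A)"
  by (simp add: homogeneous_def monom_sum)

definition graded :: "nat \<Rightarrow> F2poly poly \<Rightarrow> bool" where
  "graded d Z \<longleftrightarrow> (\<forall>j. homogeneous (d + j) (coeff Z j))"

lemma graded_0: "graded d 0"
  by (simp add: graded_def)

lemma graded_pCons: "homogeneous d a \<Longrightarrow> graded (Suc d) Z \<Longrightarrow> graded d (pCons a Z)"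
  by (auto simp: graded_def coeff_pCons split: nat.split)

lemma graded_mult:
  assumes "graded d Y" "graded e Z"
  shows "graded (d + e) (Y * Z)"
  unfolding graded_def coeff_mult
proof (intro allI homogeneous_sum)
  fix i j :: nat
  assume "i \<in> {..j}"
  then have "d + e + j = (d + i) + (e + (j - i))"
    by simp
  then show "homogeneous (d + e + j) (coeff Y i * coeff Z (j - i))"
    using assms homogeneous_mult unfolding graded_def by metis
qed

lemma graded_power:
  assumes "graded d Z"
  shows "graded (n * d) (Z ^ n)"
proof (induction n)
  case 0
  show ?case
    by (simp add: graded_def coeff_1 homogeneous_def)
next
  case (Suc n)
  show ?case
    using graded_mult[OF assms Suc] by simp
qed

lemma hom_part_poly_1:
  assumes "graded d Z"
  shows "hom_part (d + i) (poly Z 1) = coeff Z i"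
proof -
  have "hom_part (d + i) (poly Z 1) = (\<Sum>j\<le>degree Z. coeff (monom (coeff Z j) (d + j)) (d + i))"
    using assms by (simp add: hom_part_eq_coeff_grade poly_altdef coeff_sum graded_def homogeneous_def)
  also have "\<dots> = coeff Z i"
    by (simp add: coeff_eq_0)
  finally show ?thesis .
qed

text \<open>The total square \<open>\<Sum>\<^sub>i t\<^sup>i Sq\<^sup>i\<close>, with \<open>t\<close> the outer variable.\<close>

definition total_Sq :: "F2poly \<Rightarrow> F2poly poly" where
  "total_Sq = eval2 (\<lambda>c. [:const c:]) [:w1, w1 ^ 2:] [:w2, w1 * w2, w2 ^ 2:]"

interpretation total_Sq: ring_hom total_Sq
  unfolding total_Sq_def by (rule ring_hom_eval2[OF ring_hom_const_poly])

lemma total_Sq_simps [simp]: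
  "total_Sq (const c) = [:const c:]"
  "total_Sq w1 = [:w1, w1 ^ 2:]"
  "total_Sq w2 = [:w2, w1 * w2, w2 ^ 2:]"
  by (simp_all add: total_Sq_def ring_hom_const_poly)

lemma graded_total_Sq_mon: "graded (a + 2 * b) (total_Sq (mon a b))"
proof -
  have "graded 1 [:w1, w1 ^ 2:]"
    using homogeneous_mult[OF homogeneous_w1 homogeneous_w1]
    by (intro graded_pCons homogeneous_w1 graded_0) (simp add: power2_eq_square)
  moreover have "graded 2 [:w2, w1 * w2, w2 ^ 2:]"
    using homogeneous_mult[OF homogeneous_w1 homogeneous_w2]
      homogeneous_mult[OF homogeneous_w2 homogeneous_w2]
    by (intro graded_pCons homogeneous_w2 graded_0) (simp_all add: power2_eq_square eval_nat_numeral)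
  ultimately have "graded (a * 1 + b * 2) ([:w1, w1 ^ 2:] ^ a * [:w2, w1 * w2, w2 ^ 2:] ^ b)"
    by (intro graded_mult graded_power)
  then show ?thesis
    by (simp add: mon_eq mult.commute)
qed

lemma Sq_eq_coeff_total_Sq: "Sq i p = coeff (total_Sq p) i"
proof -
  have "poly (total_Sq (mon a b)) 1 = (w1 + w1 ^ 2) ^ a * (w2 + w1 * w2 + w2 ^ 2) ^ b" for a b
    by (simp add: mon_eq add.assoc)
  then have "hom_part (a + 2 * b + i) ((w1 + w1 ^ 2) ^ a * (w2 + w1 * w2 + w2 ^ 2) ^ b) =
      coeff (total_Sq (mon a b)) i" for a b
    using hom_part_poly_1[OF graded_total_Sq_mon] by metis
  then have "Sq i p = (\<Sum>b\<le>degree p. \<Sum>a\<le>degree (coeff p b).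
      coeff (total_Sq (const (coeff (coeff p b) a) * mon a b)) i)"
    by (simp add: Sq_def)
  also have "\<dots> = coeff (total_Sq p) i"
    by (subst (2) F2poly_monomial_expansion) (simp add: coeff_sum)
  finally show ?thesis .
qed

section \<open>The splitting principle\<close>

text \<open>The target of \<open>splitting\<close> is a second copy of \<^typ>\<open>F2poly\<close>, read as
  \<open>F\<^sub>2[x\<^sub>1, x\<^sub>2]\<close> with \<open>x\<^sub>1 = w1\<close> and \<open>x\<^sub>2 = w2\<close> both of degree one: it is the pullback along
  \<open>BO(1) \<times> BO(1) \<rightarrow> BO(2)\<close>, where the total Stiefel-Whitney class splits as
  \<open>(1 + x\<^sub>1)(1 + x\<^sub>2)\<close>.\<close>

definition splitting :: "F2poly \<Rightarrow> F2poly" where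
  "splitting = eval2 const (w1 + w2) (w1 * w2)"

interpretation splitting: ring_hom splitting
  unfolding splitting_def by (rule ring_hom_eval2[OF ring_hom_const])

lemma splitting_simps [simp]: "splitting w1 = w1 + w2" "splitting w2 = w1 * w2"
  by (simp_all add: splitting_def ring_hom_const)

definition total_Sq_split :: "F2poly \<Rightarrow> F2poly poly" where
  "total_Sq_split = eval2 (\<lambda>c. [:const c:]) [:w1, w1 ^ 2:] [:w2, w2 ^ 2:]"

interpretation total_Sq_split: ring_hom total_Sq_split
  unfolding total_Sq_split_def by (rule ring_hom_eval2[OF ring_hom_const_poly])

lemma total_Sq_split_simps [simp]:
  "total_Sq_split w1 = [:w1, w1 ^ 2:]" "total_Sq_split w2 = [:w2, w2 ^ 2:]"
  by (simp_all add: total_Sq_split_def ring_hom_const_poly)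

definition Sq_split :: "nat \<Rightarrow> F2poly \<Rightarrow> F2poly" where
  "Sq_split i p = coeff (total_Sq_split p) i"

fun Q_split :: "nat \<Rightarrow> F2poly \<Rightarrow> F2poly" where
  "Q_split 0 p = Sq_split 1 p"
| "Q_split (Suc n) p = Q_split n (Sq_split (2 ^ Suc n) p) - Sq_split (2 ^ Suc n) (Q_split n p)"

lemma map_poly_splitting_total_Sq: "map_poly splitting (total_Sq p) = total_Sq_split (splitting p)"
proof -
  have "(map_poly splitting \<circ> total_Sq) p = (total_Sq_split \<circ> splitting) p"
  proof (rule ring_hom_F2poly_eqI)
    show "ring_hom (map_poly splitting \<circ> total_Sq)"
      by (intro ring_hom_comp splitting.ring_hom_map_poly total_Sq.ring_hom_axioms)
    show "ring_hom (total_Sq_split \<circ> splitting)"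
      by (intro ring_hom_comp total_Sq_split.ring_hom_axioms splitting.ring_hom_axioms)
    have "(w1 + w2) ^ 2 = w1 ^ 2 + w2 ^ 2"
      using power_two_power_add_CHAR_2[OF CHAR_F2poly, of _ _ 1] by simp
    then show "(map_poly splitting \<circ> total_Sq) w1 = (total_Sq_split \<circ> splitting) w1"
      by (simp add: map_poly_pCons)
    show "(map_poly splitting \<circ> total_Sq) w2 = (total_Sq_split \<circ> splitting) w2"
      by (simp add: map_poly_pCons algebra_simps power2_eq_square)
  qed
  then show ?thesis
    by simp
qed

lemma splitting_Sq: "splitting (Sq i p) = Sq_split i (splitting p)"
  by (simp add: Sq_eq_coeff_total_Sq Sq_split_def coeff_map_poly
      map_poly_splitting_total_Sq[symmetric])

lemma splitting_Q: "splitting (Q n p) = Q_split n (splitting p)"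
  by (induction n arbitrary: p) (simp_all add: splitting_Sq)

lemma coeff_0_splitting: "coeff (splitting p) 0 = coeff p 0"
proof -
  have "((\<lambda>P. coeff P 0) \<circ> splitting) p = coeff p 0"
  proof (rule ring_hom_F2poly_eqI)
    show "ring_hom ((\<lambda>P. coeff P 0) \<circ> splitting)"
      by (intro ring_hom_comp ring_hom_coeff_0 splitting.ring_hom_axioms)
    show "((\<lambda>P. coeff P 0) \<circ> splitting) w1 = coeff w1 0"
      by (simp only: comp_apply splitting_simps) (simp add: w1_def w2_def)
    show "((\<lambda>P. coeff P 0) \<circ> splitting) w2 = coeff w2 0"
      by (simp only: comp_apply splitting_simps) (simp add: coeff_mult_0 w2_def)
  qed (rule ring_hom_coeff_0)
  then show ?thesis
    by simp
qed

lemma splitting_eq_0_iff: "splitting p = 0 \<longleftrightarrow> p = 0"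
proof
  show "splitting p = 0 \<Longrightarrow> p = 0"
  proof (induction p)
    case (pCons a p)
    have "a = coeff (splitting (pCons a p)) 0"
      by (simp add: coeff_0_splitting)
    then have "a = 0"
      using pCons.prems by simp
    then have "pCons a p = w2 * p"
      by (simp add: w2_def)
    then have "w1 * w2 * splitting p = 0"
      using pCons.prems by simp
    then have "splitting p = 0"
      by (simp add: w1_def w2_def)
    with \<open>a = 0\<close> pCons.IH show ?case
      by simp
  qed simp
qed simp

lemma inj_splitting: "inj splitting"
  by (rule injI) (metis splitting.hom_diff splitting_eq_0_iff right_minus_eq)

section \<open>The Milnor primitives on \<open>F\<^sub>2[x\<^sub>1, x\<^sub>2]\<close>\<close>

lemma Sq_split_add [simp]: "Sq_split k (p + q) = Sq_split k p + Sq_split k q"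
  by (simp add: Sq_split_def)

lemma Sq_split_mult: "Sq_split k (p * q) = (\<Sum>i\<le>k. Sq_split i p * Sq_split (k - i) q)"
  by (simp add: Sq_split_def coeff_mult)

lemma Sq_split_0 [simp]: "Sq_split 0 p = p"
proof -
  have "((\<lambda>P. coeff P 0) \<circ> total_Sq_split) p = (\<lambda>p. p) p"
  proof (rule ring_hom_F2poly_eqI)
    show "ring_hom ((\<lambda>P. coeff P 0) \<circ> total_Sq_split)"
      by (intro ring_hom_comp ring_hom_coeff_0 total_Sq_split.ring_hom_axioms)
    show "ring_hom (\<lambda>p::F2poly. p)"
      by unfold_locales simp_all
  qed simp_all
  then show ?thesis
    by (simp add: Sq_split_def)
qed

lemma total_Sq_split_power_two_power:
  assumes "x \<in> {w1, w2}"
  shows "total_Sq_split (x ^ 2 ^ j) = [:x ^ 2 ^ j:] + monom (x ^ 2 ^ Suc j) (2 ^ j)"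
proof -
  have "total_Sq_split x = [:x:] + monom (x ^ 2) 1"
    using assms by (auto simp: monom_Suc monom_0)
  moreover have "[:x:] ^ n = [:x ^ n:]" for n
    by (induction n) (simp_all add: mult.commute)
  ultimately show ?thesis
    by (simp add: power_two_power_add_CHAR_2 CHAR_bit monom_power power_mult[symmetric] mult.commute)
qed

lemma Sq_split_power_two_power:
  assumes "x \<in> {w1, w2}"
  shows "Sq_split k (x ^ 2 ^ j) = (if k = 0 then x ^ 2 ^ j else if k = 2 ^ j then x ^ 2 ^ Suc j else 0)"
  unfolding Sq_split_def total_Sq_split_power_two_power[OF assms] by (simp add: coeff_pCons')

lemma Sq_split_generator:
  assumes "x \<in> {w1, w2}"
  shows "Sq_split k x = (if k = 0 then x else if k = 1 then x ^ 2 else 0)"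
  using Sq_split_power_two_power[OF assms, of k 0] by simp

lemma derivation_Sq_split_commutator:
  assumes "derivation D"
    and commute: "\<And>i p. 0 < i \<Longrightarrow> i < k \<Longrightarrow> D (Sq_split i p) = Sq_split i (D p)"
  shows "derivation (\<lambda>p. D (Sq_split k p) - Sq_split k (D p))"
proof -
  interpret derivation D by fact
  define C where "C i p = D (Sq_split i p) - Sq_split i (D p)" for i p
  have vanish: "C i p = 0" if "i < k" for i p
    using commute[of i p] that by (cases "i = 0") (simp_all add: C_def)
  have cartan: "C k (p * q) =
      (\<Sum>i\<le>k. C i p * Sq_split (k - i) q) + (\<Sum>i\<le>k. Sq_split i p * C (k - i) q)"
    for p q
    by (simp add: C_def Sq_split_mult sum.distrib distrib_right distrib_left add_ac)
  have "(\<Sum>i\<le>k. C i p * Sq_split (k - i) q) = (\<Sum>i\<le>k. if i = k then C k p * q else 0)" for p q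
    by (intro sum.cong) (auto simp: vanish)
  moreover have "(\<Sum>i\<le>k. Sq_split i p * C (k - i) q) = (\<Sum>i\<le>k. if i = 0 then p * C k q else 0)" for p q
    by (intro sum.cong) (auto simp: vanish)
  ultimately have "C k (p * q) = C k p * q + p * C k q" for p q
    by (simp add: cartan)
  then show ?thesis
    by unfold_locales (simp_all add: C_def)
qed

lemma derivation_Sq_split_commutator_generator:
  assumes "derivation D" "x \<in> {w1, w2}" "D x = x ^ 2 ^ j" "0 < k" "k \<le> 2 ^ j"
  shows "D (Sq_split k x) - Sq_split k (D x) = (if k = 2 ^ j then x ^ 2 ^ Suc j else 0)"
proof -
  interpret derivation D by fact
  have "D (Sq_split k x) = 0"
    using \<open>0 < k\<close> by (simp add: Sq_split_generator[OF assms(2)] der_power_CHAR_2[OF CHAR_F2poly])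
  then show ?thesis
    using assms(4,5) by (simp add: assms(3) Sq_split_power_two_power[OF assms(2)])
qed

lemma derivation_Sq_split_commute_below:
  assumes "derivation D" "\<And>x. x \<in> {w1, w2} \<Longrightarrow> D x = x ^ 2 ^ j" "0 < k" "k < 2 ^ j"
  shows "D (Sq_split k p) = Sq_split k (D p)"
  using assms(3,4)
proof (induction k arbitrary: p rule: less_induct)
  case (less k)
  have "derivation (\<lambda>p. D (Sq_split k p) - Sq_split k (D p))"
    using less by (intro derivation_Sq_split_commutator assms(1)) auto
  moreover have "D (Sq_split k x) - Sq_split k (D x) = 0" if "x \<in> {w1, w2}" for x
    using derivation_Sq_split_commutator_generator[OF assms(1) that assms(2)[OF that]] less.prems
    by simp
  ultimately have "D (Sq_split k p) - Sq_split k (D p) = 0"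
    using derivation_F2poly_eq_zero by blast
  then show ?case
    by (simp only: right_minus_eq)
qed

lemma derivation_Q_split:
  "derivation (Q_split n) \<and> (\<forall>x\<in>{w1, w2}. Q_split n x = x ^ 2 ^ Suc n)"
proof (induction n)
  case 0
  have "derivation (Sq_split 1)"
    by unfold_locales (simp_all add: Sq_split_mult atMost_Suc)
  then show ?case
    by (auto simp: Sq_split_generator)
next
  case (Suc n)
  then have "derivation (Q_split n)"
    and gen: "\<And>x. x \<in> {w1, w2} \<Longrightarrow> Q_split n x = x ^ 2 ^ Suc n"
    by auto
  have "derivation (\<lambda>p. Q_split n (Sq_split (2 ^ Suc n) p) - Sq_split (2 ^ Suc n) (Q_split n p))"
    using derivation_Sq_split_commute_below[where j = "Suc n"] \<open>derivation (Q_split n)\<close> gen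
    by (intro derivation_Sq_split_commutator) auto
  moreover have "Q_split (Suc n) x = x ^ 2 ^ Suc (Suc n)" if "x \<in> {w1, w2}" for x
    using derivation_Sq_split_commutator_generator[OF \<open>derivation (Q_split n)\<close> that gen[OF that]]
    by simp
  ultimately show ?case
    by (simp add: Q_split.simps(2)[abs_def])
qed

lemma derivation_Q: "derivation (Q n)"
proof
  fix p q
  have "derivation (Q_split n)"
    using derivation_Q_split by blast
  then interpret Q_split: derivation "Q_split n" .
  show "Q n (p + q) = Q n p + Q n q" "Q n (p * q) = Q n p * q + p * Q n q"
    by (simp_all add: inj_splitting[THEN injD] splitting_Q)
qed

lemma splitting_w1_wbar: "splitting (w1 * wbar k) = w1 ^ Suc k + w2 ^ Suc k"
proof (induction k rule: wbar.induct)
  case 2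
  show ?case
    using power_two_power_add_CHAR_2[OF CHAR_F2poly, of w1 w2 1] by (simp add: power2_eq_square)
next
  case (3 k)
  have "splitting (w1 * wbar (Suc (Suc k))) = splitting (w1 * (w1 * wbar (Suc k)) + w2 * (w1 * wbar k))"
    by (rule arg_cong[where f = splitting]) (simp add: algebra_simps)
  also have "\<dots> = (w1 + w2) * splitting (w1 * wbar (Suc k)) + w1 * w2 * splitting (w1 * wbar k)"
    by (simp only: splitting.hom_add splitting.hom_mult[of w1 "w1 * wbar (Suc k)"]
        splitting.hom_mult[of w2 "w1 * wbar k"] splitting_simps)
  also have "\<dots> = w1 ^ Suc (Suc (Suc k)) + w2 ^ Suc (Suc (Suc k))"
    by (simp only: 3) (simp add: algebra_simps)
  finally show ?case .
qed simp

lemma Q_w2: "Q n w2 = w1 * w2 * wbar (2 ^ Suc n - 2)"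
proof (rule inj_splitting[THEN injD])
  define m :: nat where "m = 2 ^ Suc n - 2"
  have "2 \<le> (2::nat) ^ Suc n"
    by simp
  then have m: "2 ^ Suc n = Suc (Suc m)"
    unfolding m_def by linarith
  have "derivation (Q_split n)" and gen: "Q_split n w1 = w1 ^ Suc (Suc m)" "Q_split n w2 = w2 ^ Suc (Suc m)"
    using derivation_Q_split[of n] unfolding m by auto
  then interpret Q_split: derivation "Q_split n" by simp
  have "splitting (w1 * w2 * wbar m) = w1 * w2 * (w1 ^ Suc m + w2 ^ Suc m)"
    using splitting_w1_wbar[of m] by (simp add: ac_simps)
  then show "splitting (Q n w2) = splitting (w1 * w2 * wbar (2 ^ Suc n - 2))"
    unfolding m_def[symmetric] by (simp add: splitting_Q gen algebra_simps)
qed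

section \<open>Relations in \<open>H\<^sup>*(Gr\<^sub>2(\<real>\<^sup>m); \<int>/2)\<close>\<close>

lemma mult_wbar_in_gr_ideal: "m - 1 \<le> k \<Longrightarrow> r * wbar k \<in> gr_ideal m"
  unfolding gr_ideal_def
  by (intro CollectI exI[of _ k] exI[of _ "\<lambda>j. if j = k then r else 0"])
    (simp add: if_distrib[where f = "\<lambda>c. c * _"] cong: if_cong)

lemma sum_wbar_extend:
  assumes "K \<le> K'"
  shows "(\<Sum>k\<in>{a..K}. c k * wbar k) = (\<Sum>k\<in>{a..K'}. (if k \<le> K then c k else 0) * wbar k)"
proof -
  have "(\<Sum>k\<in>{a..K'}. (if k \<le> K then c k else 0) * wbar k) =
      (\<Sum>k\<in>{a..K'}. if k \<le> K then c k * wbar k else 0)"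
    by (intro sum.cong) auto
  also have "\<dots> = (\<Sum>k\<in>{k \<in> {a..K'}. k \<le> K}. c k * wbar k)"
    by (rule sum.inter_filter[symmetric]) simp
  also have "{k \<in> {a..K'}. k \<le> K} = {a..K}"
    using assms by auto
  finally show ?thesis ..
qed

lemma add_in_gr_ideal:
  assumes "p \<in> gr_ideal m" "q \<in> gr_ideal m"
  shows "p + q \<in> gr_ideal m"
proof -
  obtain K c L d where p: "p = (\<Sum>k\<in>{m - 1..K}. c k * wbar k)"
    and q: "q = (\<Sum>k\<in>{m - 1..L}. d k * wbar k)"
    using assms unfolding gr_ideal_def by blast
  let ?c = "\<lambda>k. if k \<le> K then c k else 0" and ?d = "\<lambda>k. if k \<le> L then d k else 0"
  have "p + q = (\<Sum>k\<in>{m - 1..max K L}. (?c k + ?d k) * wbar k)"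
    unfolding p q sum_wbar_extend[OF max.cobounded1[of K L]] sum_wbar_extend[OF max.cobounded2[of L K]]
    by (simp only: sum.distrib distrib_right)
  then show ?thesis
    unfolding gr_ideal_def by (intro CollectI exI)
qed

lemma mult_in_gr_ideal:
  assumes "p \<in> gr_ideal m"
  shows "r * p \<in> gr_ideal m"
proof -
  obtain K c where "p = (\<Sum>k\<in>{m - 1..K}. c k * wbar k)"
    using assms unfolding gr_ideal_def by blast
  then have "r * p = (\<Sum>k\<in>{m - 1..K}. (r * c k) * wbar k)"
    by (simp add: sum_distrib_left mult.assoc)
  then show ?thesis
    unfolding gr_ideal_def by (intro CollectI exI)
qed

lemma w2_power_wbar_in_gr_ideal: "m - 1 \<le> i + j \<Longrightarrow> w2 ^ j * wbar i \<in> gr_ideal m"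
proof (induction j arbitrary: i)
  case 0
  then show ?case
    using mult_wbar_in_gr_ideal[of m i 1] by simp
next
  case (Suc j)
  have "w2 ^ Suc j * wbar i = w2 ^ j * wbar (i + 2) + w1 * (w2 ^ j * wbar (i + 1))"
    by (simp add: algebra_simps)
  also have "\<dots> \<in> gr_ideal m"
    using Suc by (intro add_in_gr_ideal mult_in_gr_ideal Suc.IH) simp_all
  finally show ?case .
qed

lemma w1_power_wbar_cong_w2_power_wbar: "w1 ^ j * wbar (i + j) + w2 ^ j * wbar i \<in> gr_ideal (i + j + 2)"
proof (induction j arbitrary: i)
  case 0
  then show ?case
    using mult_wbar_in_gr_ideal[of "i + 2" "i + 1" 0] by simp
next
  case (Suc j)
  have "w1 ^ Suc j * wbar (i + Suc j) + w2 ^ Suc j * wbar i =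
      w1 * (w1 ^ j * wbar (Suc i + j) + w2 ^ j * wbar (Suc i)) + w2 ^ j * wbar (i + 2)"
    by (simp add: algebra_simps)
  also have "\<dots> \<in> gr_ideal (Suc i + j + 2)"
    by (rule add_in_gr_ideal[OF mult_in_gr_ideal[OF Suc.IH] w2_power_wbar_in_gr_ideal]) simp
  finally show ?case
    by simp
qed

theorem proposition5p8:
  fixes n l :: nat
  shows "eq_in_Gr2 (2 ^ (n + 1) + 1 + 2 * l) (Q n (w2 ^ (2 * l + 1)))
           (w1 ^ (2 * l + 2) * wbar (2 ^ (n + 1) - 1 + 2 * l))"
proof -
  define m :: nat where "m = 2 ^ (n + 1) - 2"
  have "2 \<le> (2::nat) ^ (n + 1)"
    by simp
  then have "(2::nat) ^ (n + 1) = m + 2"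
    unfolding m_def by linarith
  then have indices: "2 ^ (n + 1) + 1 + 2 * l = m + (2 * l + 1) + 2"
    "2 ^ (n + 1) - 1 + 2 * l = m + (2 * l + 1)"
    by simp_all
  interpret Q: derivation "Q n"
    by (rule derivation_Q)
  have "Q n (w2 ^ (2 * l + 1)) = w1 * (w2 ^ (2 * l + 1) * wbar m)"
    by (simp add: Q.der_power_CHAR_2[OF CHAR_F2poly] Q_w2 m_def algebra_simps)
  then have "Q n (w2 ^ (2 * l + 1)) - w1 ^ (2 * l + 2) * wbar (m + (2 * l + 1)) =
      w1 * (w1 ^ (2 * l + 1) * wbar (m + (2 * l + 1)) + w2 ^ (2 * l + 1) * wbar m)"
    by (simp add: algebra_simps)
  then show ?thesis
    unfolding eq_in_Gr2_def indices by (metis mult_in_gr_ideal w1_power_wbar_cong_w2_power_wbar)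
qed

end
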